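(* Let $\varphi$ be an almost identity PC-map of $\mathrm{UT}(n,F)$ and let $k$ be a positive integer with $k\le n-3$. If condition $X_k$ holds for $\varphi$, then condition $Y_k$ holds for $\varphi$.
   Context: $F$ is a field and $n\in\mathbb N\cup\{\infty\}$. $\mathrm{UT}(n,F)$ is the group of upper unitriangular $n\times n$ matrices over $F$ (for $n=\infty$: all $\mathbb N\times\mathbb N$ matrices with $1$ on the diagonal and $0$ below it). Convention: $\infty+m=\infty$ for $m\in\mathbb Z$. $e$ is the identity matrix, $e_{ij}$ the matrix unit, $t_{ij}(\alpha)=e+\alpha e_{ij}$ ($i<j$). $[x,y]=xyx^{-1}y^{-1}$. A PC-map is a bijection $\varphi$ of the group with $\varphi([x,y])=[\varphi(x),\varphi(y)]$ for all $x,y$; it is almost identity if $\varphi(t_{ij}(\alpha))=t_{ij}(\alpha)$ for all $i<j$, $\alpha\in F$. $C$ denotes the center of $\mathrm{UT}(n,F)$ (trivial if $n=\infty$, equal to $\{t_{1n}(\alpha):\alpha\in F\}$ if $n$ is finite). Conditions: $X_k$ ($k\le n-2$): $\varphi(a)_{1i}=a_{1i}$ for all $a\in\mathrm{UT}(n,F)$ and all $i=2,\dots,k$. $Y_k$ ($k\le n-3$): for all $\beta,\alpha_1,\dots,\alpha_{k-1}\in F$, the matrix $y=t_{k+1\,k+2}(\beta)\prod_{i=1}^{k-1}t_{ik}(\alpha_i)$ satisfies $\varphi(y)\in yC$. *)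

theory Defs
  imports Main "HOL-Library.Extended_Nat"
begin

text \<open>Matrices are functions nat => nat => 'a, indices 1-based.
  The size n is an extended natural (infinity = N x N matrices).
  Entries outside the index range are normalised to 0.\<close>

type_synonym 'a mat = "nat \<Rightarrow> nat \<Rightarrow> 'a"

definition ut_idx :: "enat \<Rightarrow> nat \<Rightarrow> bool" where
  "ut_idx n i \<longleftrightarrow> 1 \<le> i \<and> enat i \<le> n"

definition UT :: "enat \<Rightarrow> ('a::field) mat set" where
  "UT n = {A. \<forall>i j. (\<not> (ut_idx n i \<and> ut_idx n j) \<longrightarrow> A i j = 0)
                 \<and> (ut_idx n i \<and> ut_idx n j \<longrightarrow> (i = j \<longrightarrow> A i j = 1) \<and> (j < i \<longrightarrow> A i j = 0))}"

definition ut_one :: "enat \<Rightarrow> ('a::field) mat" where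
  "ut_one n = (\<lambda>i j. if ut_idx n i \<and> i = j then 1 else 0)"

text \<open>Matrix product; for upper triangular matrices the sum is finite.\<close>
definition ut_mult :: "('a::field) mat \<Rightarrow> 'a mat \<Rightarrow> 'a mat" where
  "ut_mult A B = (\<lambda>i j. \<Sum>k\<in>{i..j}. A i k * B k j)"

definition ut_inv :: "enat \<Rightarrow> ('a::field) mat \<Rightarrow> 'a mat" where
  "ut_inv n A = (THE B. B \<in> UT n \<and> ut_mult A B = ut_one n)"

definition ut_comm :: "enat \<Rightarrow> ('a::field) mat \<Rightarrow> 'a mat \<Rightarrow> 'a mat" where
  "ut_comm n x y = ut_mult (ut_mult (ut_mult x y) (ut_inv n x)) (ut_inv n y)"

definition ut_t :: "enat \<Rightarrow> nat \<Rightarrow> nat \<Rightarrow> ('a::field) \<Rightarrow> 'a mat" where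
  "ut_t n i j \<alpha> = (\<lambda>r s. ut_one n r s + (if r = i \<and> s = j then \<alpha> else 0))"

definition PC_map :: "enat \<Rightarrow> (('a::field) mat \<Rightarrow> 'a mat) \<Rightarrow> bool" where
  "PC_map n \<phi> \<longleftrightarrow> bij_betw \<phi> (UT n) (UT n) \<and>
     (\<forall>x\<in>UT n. \<forall>y\<in>UT n. \<phi> (ut_comm n x y) = ut_comm n (\<phi> x) (\<phi> y))"

definition almost_identity :: "enat \<Rightarrow> (('a::field) mat \<Rightarrow> 'a mat) \<Rightarrow> bool" where
  "almost_identity n \<phi> \<longleftrightarrow>
     (\<forall>i j \<alpha>. ut_idx n i \<and> ut_idx n j \<and> i < j \<longrightarrow> \<phi> (ut_t n i j \<alpha>) = ut_t n i j \<alpha>)"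

definition ut_center :: "enat \<Rightarrow> ('a::field) mat set" where
  "ut_center n = (case n of enat m \<Rightarrow> {ut_t n 1 m \<alpha> | \<alpha>. True} | \<infinity> \<Rightarrow> {ut_one n})"

definition cond_X :: "enat \<Rightarrow> (('a::field) mat \<Rightarrow> 'a mat) \<Rightarrow> nat \<Rightarrow> bool" where
  "cond_X n \<phi> k \<longleftrightarrow> (\<forall>a\<in>UT n. \<forall>i\<in>{2..k}. \<phi> a 1 i = a 1 i)"

definition col_prod :: "enat \<Rightarrow> nat \<Rightarrow> (nat \<Rightarrow> ('a::field)) \<Rightarrow> nat \<Rightarrow> 'a mat" where
  "col_prod n k \<alpha> m = foldr (\<lambda>i P. ut_mult (ut_t n i k (\<alpha> i)) P) [1..<m] (ut_one n)"

definition cond_Y :: "enat \<Rightarrow> (('a::field) mat \<Rightarrow> 'a mat) \<Rightarrow> nat \<Rightarrow> bool" where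
  "cond_Y n \<phi> k \<longleftrightarrow> (\<forall>(\<beta>::'a) (\<alpha>::nat \<Rightarrow> 'a).
     let y = ut_mult (ut_t n (k+1) (k+2) \<beta>) (col_prod n k \<alpha> k)
     in \<exists>c\<in>ut_center n. \<phi> y = ut_mult y c)"

end

theory Submission imports Defs begin

text \<open>An almost identity PC-map fixes all transvections and preserves commutators, so every
  identity \<open>[y, t] = t'\<close> between y and transvections t, t' also holds for \<open>\<phi>(y)\<close>.
  Read entrywise, \<open>[Z, t_1r(1)] = t_1q(g)\<close> expresses row r of Z through row q, and
  \<open>[Z, t_s,s+1(1)] = t_p'q'(g')\<close> with \<open>p' \<noteq> 1\<close> forces \<open>Z_1s = 0\<close>. For the element y of
  condition \<open>Y_k\<close> such identities determine every row of \<open>\<phi>(y)\<close> but the first, and the first row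
  beyond column k except the corner; \<open>X_k\<close> supplies the first row up to column k. So \<open>\<phi>(y)\<close> and y
  differ at most in the entry \<open>(1, n)\<close>, that is by a central factor.\<close>

lemma UT_zero_row: "A \<in> UT n \<Longrightarrow> \<not> ut_idx n i \<Longrightarrow> A i j = 0"
  and UT_zero_col: "A \<in> UT n \<Longrightarrow> \<not> ut_idx n j \<Longrightarrow> A i j = 0"
  and UT_diag: "A \<in> UT n \<Longrightarrow> ut_idx n i \<Longrightarrow> A i i = 1"
  and UT_below_diag: "A \<in> UT n \<Longrightarrow> j < i \<Longrightarrow> A i j = 0"
  by (auto simp: UT_def)

lemma UTI:
  assumes "\<And>i j. \<not> (ut_idx n i \<and> ut_idx n j) \<Longrightarrow> A i j = 0"
    and "\<And>i. ut_idx n i \<Longrightarrow> A i i = 1"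
    and "\<And>i j. ut_idx n i \<Longrightarrow> ut_idx n j \<Longrightarrow> j < i \<Longrightarrow> A i j = 0"
  shows "A \<in> UT n"
  using assms by (auto simp: UT_def)

lemma ut_idx_trans: "ut_idx n j \<Longrightarrow> 1 \<le> i \<Longrightarrow> i \<le> j \<Longrightarrow> ut_idx n i"
  unfolding ut_idx_def by (meson enat_ord_simps(1) order_trans)

lemma ut_mult_assoc: "ut_mult (ut_mult A B) C = ut_mult A (ut_mult B C)"
proof (intro ext)
  fix i j
  have "ut_mult (ut_mult A B) C i j
      = (\<Sum>k\<in>{i..j}. \<Sum>m\<in>{x. x \<in> {i..j} \<and> x \<le> k}. A i m * B m k * C k j)"
    unfolding ut_mult_def by (simp add: sum_distrib_right) (intro sum.cong; auto intro!: sum.cong)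
  also have "\<dots> = (\<Sum>m\<in>{i..j}. \<Sum>k\<in>{x. x \<in> {i..j} \<and> m \<le> x}. A i m * B m k * C k j)"
    by (rule sum.swap_restrict[symmetric]) auto
  also have "\<dots> = ut_mult A (ut_mult B C) i j"
    unfolding ut_mult_def by (simp add: sum_distrib_left mult.assoc) (intro sum.cong; auto intro!: sum.cong)
  finally show "ut_mult (ut_mult A B) C i j = ut_mult A (ut_mult B C) i j" .
qed

lemma ut_one_UT: "ut_one n \<in> UT n"
  by (rule UTI) (auto simp: ut_one_def)

lemma ut_mult_one_left: "B \<in> UT n \<Longrightarrow> ut_mult (ut_one n) B = B"
proof (intro ext)
  fix i j assume B: "B \<in> UT n"
  have "ut_mult (ut_one n) B i j = (\<Sum>k\<in>{i..j}. if k = i then (if ut_idx n i then B i j else 0) else 0)"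
    unfolding ut_mult_def ut_one_def by (intro sum.cong) auto
  also have "\<dots> = B i j" using B by (auto simp: UT_zero_row UT_below_diag)
  finally show "ut_mult (ut_one n) B i j = B i j" .
qed

lemma ut_mult_one_right: "B \<in> UT n \<Longrightarrow> ut_mult B (ut_one n) = B"
proof (intro ext)
  fix i j assume B: "B \<in> UT n"
  have "ut_mult B (ut_one n) i j = (\<Sum>k\<in>{i..j}. if k = j then (if ut_idx n j then B i j else 0) else 0)"
    unfolding ut_mult_def ut_one_def by (intro sum.cong) auto
  also have "\<dots> = B i j" using B by (auto simp: UT_zero_col UT_below_diag)
  finally show "ut_mult B (ut_one n) i j = B i j" .
qed

lemma ut_mult_UT:
  assumes A: "A \<in> UT n" and B: "B \<in> UT n"
  shows "ut_mult A B \<in> UT n"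
proof (rule UTI)
  fix i j :: nat assume "\<not> (ut_idx n i \<and> ut_idx n j)"
  then show "ut_mult A B i j = 0"
    unfolding ut_mult_def by (auto intro!: sum.neutral simp: UT_zero_row[OF A] UT_zero_col[OF B])
qed (use A B in \<open>simp_all add: ut_mult_def UT_diag\<close>)

function ut_rinv :: "('a::field) mat \<Rightarrow> nat \<Rightarrow> nat \<Rightarrow> 'a" where
  "ut_rinv x i j =
     (if i < j then - (\<Sum>m\<in>{Suc i..j}. x i m * ut_rinv x m j) else if i = j then 1 else 0)"
  by auto
termination by (relation "measure (\<lambda>(x, i, j). j - i)") auto

declare ut_rinv.simps[simp del]

lemma ut_right_inverse_exists:
  assumes x: "x \<in> UT n"
  shows "\<exists>B\<in>UT n. ut_mult x B = ut_one n"
proof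
  define B where "B = (\<lambda>i j. if ut_idx n i \<and> ut_idx n j then ut_rinv x i j else (0::'a))"
  show "B \<in> UT n"
    by (rule UTI) (auto simp: B_def ut_rinv.simps)
  show "ut_mult x B = ut_one n"
  proof (intro ext)
    fix i j
    show "ut_mult x B i j = ut_one n i j"
    proof (cases "ut_idx n i \<and> ut_idx n j \<and> i \<le> j")
      case False
      then show ?thesis
        unfolding ut_mult_def ut_one_def B_def
        using x by (auto intro!: sum.neutral simp: UT_zero_row UT_zero_col)
    next
      case True
      then have ij: "ut_idx n i" "ut_idx n j" "i \<le> j" by auto
      have "ut_mult x B i j = x i i * B i j + (\<Sum>m\<in>{Suc i..j}. x i m * B m j)"
        unfolding ut_mult_def using ij by (simp add: sum.atLeast_Suc_atMost)
      also have "\<dots> = B i j + (\<Sum>m\<in>{Suc i..j}. x i m * ut_rinv x m j)"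
        using ij x ut_idx_trans[OF ij(2)] by (auto simp: UT_diag B_def ut_idx_def intro!: sum.cong)
      also have "\<dots> = ut_one n i j"
        using ij by (cases "i = j") (auto simp: B_def ut_one_def ut_rinv.simps[of x i j] ut_rinv.simps[of x j j])
      finally show ?thesis .
    qed
  qed
qed

lemma ut_inv_UT: "x \<in> UT n \<Longrightarrow> ut_inv n x \<in> UT n"
  and ut_mult_inv_right: "x \<in> UT n \<Longrightarrow> ut_mult x (ut_inv n x) = ut_one n"
  and ut_mult_inv_left: "x \<in> UT n \<Longrightarrow> ut_mult (ut_inv n x) x = ut_one n"
proof -
  assume x: "x \<in> UT n"
  obtain B where B: "B \<in> UT n" "ut_mult x B = ut_one n"
    using ut_right_inverse_exists[OF x] by blast
  obtain B' where B': "B' \<in> UT n" "ut_mult B B' = ut_one n"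
    using ut_right_inverse_exists[OF B(1)] by blast
  have "x = ut_mult x (ut_mult B B')" using B' x by (simp add: ut_mult_one_right)
  also have "\<dots> = B'" by (simp only: ut_mult_assoc[symmetric] B(2)) (simp add: ut_mult_one_left B')
  finally have Bx: "ut_mult B x = ut_one n" using B' by simp
  have "C = B" if "C \<in> UT n" "ut_mult x C = ut_one n" for C
  proof -
    have "C = ut_mult (ut_mult B x) C" using Bx that by (simp add: ut_mult_one_left)
    also have "\<dots> = B" by (simp add: ut_mult_assoc that ut_mult_one_right B)
    finally show ?thesis .
  qed
  then have "ut_inv n x = B"
    unfolding ut_inv_def using B by blast
  then show "ut_inv n x \<in> UT n" "ut_mult x (ut_inv n x) = ut_one n" "ut_mult (ut_inv n x) x = ut_one n"
    using B Bx by auto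
qed

lemma ut_comm_eq_iff:
  assumes x: "x \<in> UT n" and t: "t \<in> UT n" and c: "c \<in> UT n"
  shows "ut_comm n x t = c \<longleftrightarrow> ut_mult c (ut_mult t x) = ut_mult x t"
proof
  assume h: "ut_comm n x t = c"
  have "ut_mult c (ut_mult t x)
      = ut_mult (ut_mult x t) (ut_mult (ut_inv n x) (ut_mult (ut_mult (ut_inv n t) t) x))"
    unfolding h[symmetric] ut_comm_def by (simp add: ut_mult_assoc)
  also have "\<dots> = ut_mult x t"
    using x t by (simp add: ut_mult_inv_left ut_mult_one_left ut_mult_one_right ut_mult_UT)
  finally show "ut_mult c (ut_mult t x) = ut_mult x t" .
next
  assume h: "ut_mult c (ut_mult t x) = ut_mult x t"
  have "ut_comm n x t = ut_mult (ut_mult c (ut_mult t x)) (ut_mult (ut_inv n x) (ut_inv n t))"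
    unfolding h ut_comm_def by (simp add: ut_mult_assoc)
  also have "\<dots> = ut_mult c (ut_mult t (ut_mult (ut_mult x (ut_inv n x)) (ut_inv n t)))"
    by (simp add: ut_mult_assoc)
  also have "\<dots> = c"
    using x t c by (simp add: ut_mult_inv_right ut_mult_one_left ut_mult_one_right ut_inv_UT)
  finally show "ut_comm n x t = c" .
qed

lemma ut_t_UT: "ut_idx n p \<Longrightarrow> ut_idx n q \<Longrightarrow> p < q \<Longrightarrow> ut_t n p q g \<in> UT n"
  by (rule UTI) (auto simp: ut_t_def ut_one_def)

lemma ut_mult_t_left:
  assumes Z: "Z \<in> UT n" and pq: "p < q"
  shows "ut_mult (ut_t n p q g) Z = (\<lambda>i j. Z i j + (if i = p then g * Z q j else 0))"
proof (intro ext)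
  fix i j
  have "ut_mult (ut_t n p q g) Z i j
      = ut_mult (ut_one n) Z i j + (\<Sum>m\<in>{i..j}. (if i = p \<and> m = q then g else 0) * Z m j)"
    unfolding ut_mult_def ut_t_def by (simp add: distrib_right sum.distrib)
  also have "(\<Sum>m\<in>{i..j}. (if i = p \<and> m = q then g else 0) * Z m j)
      = (\<Sum>m\<in>{i..j}. if m = q then (if i = p then g * Z q j else 0) else 0)"
    by (intro sum.cong) auto
  also have "\<dots> = (if i = p then g * Z q j else 0)"
    using pq UT_below_diag[OF Z, of j q] by auto
  finally show "ut_mult (ut_t n p q g) Z i j = Z i j + (if i = p then g * Z q j else 0)"
    by (simp add: ut_mult_one_left[OF Z])
qed

lemma ut_mult_t_right:
  assumes Z: "Z \<in> UT n" and pq: "p < q"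
  shows "ut_mult Z (ut_t n p q g) = (\<lambda>i j. Z i j + (if j = q then g * Z i p else 0))"
proof (intro ext)
  fix i j
  have "ut_mult Z (ut_t n p q g) i j
      = ut_mult Z (ut_one n) i j + (\<Sum>m\<in>{i..j}. Z i m * (if m = p \<and> j = q then g else 0))"
    unfolding ut_mult_def ut_t_def by (simp add: distrib_left sum.distrib)
  also have "(\<Sum>m\<in>{i..j}. Z i m * (if m = p \<and> j = q then g else 0))
      = (\<Sum>m\<in>{i..j}. if m = p then (if j = q then g * Z i p else 0) else 0)"
    by (intro sum.cong) auto
  also have "\<dots> = (if j = q then g * Z i p else 0)"
    using pq UT_below_diag[OF Z, of p i] by auto
  finally show "ut_mult Z (ut_t n p q g) i j = Z i j + (if j = q then g * Z i p else 0)"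
    by (simp add: ut_mult_one_right[OF Z])
qed

text \<open>The equation \<open>t_p'q'(g') t_pq(g) Z = Z t_pq(g)\<close>, entry by entry.\<close>
lemma ut_comm_t_eq_t_iff:
  assumes Z: "Z \<in> UT n"
    and pq: "ut_idx n p" "ut_idx n q" "p < q" and pq': "ut_idx n p'" "ut_idx n q'" "p' < q'"
  shows "ut_comm n Z (ut_t n p q g) = ut_t n p' q' g' \<longleftrightarrow>
    (\<forall>r s. (if r = p then g * Z q s else 0)
           + (if r = p' then g' * (Z q' s + (if q' = p then g * Z q s else 0)) else 0)
         = (if s = q then g * Z r p else 0))"
proof -
  have tZ: "ut_mult (ut_t n p q g) Z \<in> UT n" by (rule ut_mult_UT[OF ut_t_UT[OF pq] Z])
  show ?thesis
    unfolding ut_comm_eq_iff[OF Z ut_t_UT[OF pq] ut_t_UT[OF pq']] ut_mult_t_left[OF tZ pq'(3)]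
    unfolding ut_mult_t_left[OF Z pq(3)] ut_mult_t_right[OF Z pq(3)]
    by (simp only: fun_eq_iff add.assoc add_left_cancel)
qed

lemma ut_comm_t_first_row:
  assumes Z: "Z \<in> UT n" and q: "ut_idx n q" "1 < q" and q': "ut_idx n q'" "1 < q'"
    and comm: "ut_comm n Z (ut_t n 1 q 1) = ut_t n 1 q' g'"
  shows "Z q s = ut_one n q s - g' * Z q' s"
proof -
  have one: "ut_idx n 1" using ut_idx_trans[OF q(1), of 1] q(2) by simp
  have "Z q s + g' * Z q' s = (if s = q then Z 1 1 else 0)"
    using ut_comm_t_eq_t_iff[OF Z one q(1,2) one q'(1,2), THEN iffD1, OF comm, rule_format, of 1 s] q'
    by simp
  then show ?thesis using UT_diag[OF Z one] q by (auto simp: ut_one_def algebra_simps)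
qed

lemma ut_comm_t_column:
  assumes Z: "Z \<in> UT n" and pq: "ut_idx n p" "ut_idx n q" "p < q"
    and pq': "ut_idx n p'" "ut_idx n q'" "p' < q'"
    and comm: "ut_comm n Z (ut_t n p q 1) = ut_t n p' q' g'" and r: "r \<noteq> p" "r \<noteq> p'"
  shows "Z r p = 0"
  using ut_comm_t_eq_t_iff[OF Z pq pq', THEN iffD1, OF comm, rule_format, of r q] r by simp

lemma PC_map_almost_identity_comm_t:
  assumes PC: "PC_map n \<phi>" and AI: "almost_identity n \<phi>" and y: "y \<in> UT n"
    and pq: "ut_idx n p" "ut_idx n q" "p < q" and pq': "ut_idx n p'" "ut_idx n q'" "p' < q'"
    and comm: "ut_comm n y (ut_t n p q g) = ut_t n p' q' g'"
  shows "ut_comm n (\<phi> y) (ut_t n p q g) = ut_t n p' q' g'"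
proof -
  have "\<phi> (ut_t n p q g) = ut_t n p q g"
    using AI pq by (simp add: almost_identity_def)
  then have "ut_comm n (\<phi> y) (ut_t n p q g) = \<phi> (ut_comm n y (ut_t n p q g))"
    using PC y ut_t_UT[OF pq] unfolding PC_map_def by metis
  also have "\<dots> = ut_t n p' q' g'"
    using comm AI pq' by (simp add: almost_identity_def)
  finally show ?thesis .
qed

lemma UT_eq_off_corner:
  assumes Y: "Y \<in> UT n" and Z: "Z \<in> UT n" and n: "1 < n"
    and eq: "\<And>r s. \<not> (r = 1 \<and> enat s = n) \<Longrightarrow> Z r s = Y r s"
  shows "\<exists>c\<in>ut_center n. Z = ut_mult Y c"
proof (cases n)
  case (enat m)
  have m: "1 < m" using n enat by (simp add: one_enat_def)
  have one: "ut_idx n 1" using enat m by (simp add: ut_idx_def)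
  have col1: "Y i (Suc 0) = (if i = 1 then 1 else 0)" for i
    using UT_diag[OF Y one] UT_below_diag[OF Y, of 1 i] UT_zero_row[OF Y, of i 1]
    by (cases "i = 0") (auto simp: ut_idx_def)
  have "ut_mult Y (ut_t n 1 m (Z 1 m - Y 1 m)) = Z"
    unfolding ut_mult_t_right[OF Y m] using eq enat by (auto simp: col1 fun_eq_iff)
  moreover have "ut_t n 1 m (Z 1 m - Y 1 m) \<in> ut_center n"
    using enat by (auto simp: ut_center_def)
  ultimately show ?thesis by metis
next
  case infinity
  then have "Z = ut_mult Y (ut_one n)"
    unfolding ut_mult_one_right[OF Y] using eq by (simp add: fun_eq_iff)
  then show ?thesis using infinity by (simp add: ut_center_def)
qed

lemma foldr_ut_t_column:
  assumes k: "ut_idx n k" and xs: "\<forall>i\<in>set xs. 1 \<le> i \<and> i < k" "distinct xs"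
  shows "foldr (\<lambda>i P. ut_mult (ut_t n i k (\<alpha> i)) P) xs (ut_one n)
           = (\<lambda>r s. ut_one n r s + (if s = k \<and> r \<in> set xs then \<alpha> r else 0))
       \<and> foldr (\<lambda>i P. ut_mult (ut_t n i k (\<alpha> i)) P) xs (ut_one n) \<in> UT n"
  using xs
proof (induction xs)
  case Nil
  then show ?case by (simp add: ut_one_UT)
next
  case (Cons i xs)
  let ?Q = "foldr (\<lambda>i P. ut_mult (ut_t n i k (\<alpha> i)) P) xs (ut_one n)"
  have Q: "?Q = (\<lambda>r s. ut_one n r s + (if s = k \<and> r \<in> set xs then \<alpha> r else 0))" "?Q \<in> UT n"
    using Cons by auto
  have i: "1 \<le> i" "i < k" "i \<notin> set xs" "k \<notin> set xs" using Cons.prems by auto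
  have "ut_mult (ut_t n i k (\<alpha> i)) ?Q
      = (\<lambda>r s. ut_one n r s + (if s = k \<and> r \<in> set (i # xs) then \<alpha> r else 0))"
    unfolding ut_mult_t_left[OF Q(2) i(2)] unfolding Q(1)
    using i k by (auto simp: ut_one_def fun_eq_iff)
  moreover have "ut_mult (ut_t n i k (\<alpha> i)) ?Q \<in> UT n"
    using i k by (intro ut_mult_UT[OF ut_t_UT Q(2)]) (auto intro: ut_idx_trans)
  ultimately show ?case by simp
qed

lemma ut_t_col_prod:
  assumes k: "0 < k" "enat (k + 2) \<le> n"
  shows "ut_mult (ut_t n (k+1) (k+2) \<beta>) (col_prod n k \<alpha> k) =
      (\<lambda>r s. ut_one n r s + (if s = k \<and> 1 \<le> r \<and> r < k then \<alpha> r else 0)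
             + (if r = k+1 \<and> s = k+2 then \<beta> else 0))"
proof -
  have "ut_idx n (k+2)" using k by (simp add: ut_idx_def)
  then have idx: "ut_idx n k" "ut_idx n (k+1)" "ut_idx n (k+2)"
    using k by (auto intro: ut_idx_trans)
  have C: "col_prod n k \<alpha> k = (\<lambda>r s. ut_one n r s + (if s = k \<and> 1 \<le> r \<and> r < k then \<alpha> r else 0))"
    "col_prod n k \<alpha> k \<in> UT n"
    using foldr_ut_t_column[OF idx(1), of "[1..<k]" \<alpha>] unfolding col_prod_def by auto
  have "ut_mult (ut_t n (k+1) (k+2) \<beta>) (col_prod n k \<alpha> k) = (\<lambda>r s.
      col_prod n k \<alpha> k r s + (if r = k+1 then \<beta> * col_prod n k \<alpha> k (k+2) s else 0))"
    by (rule ut_mult_t_left[OF C(2)]) simp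
  then show ?thesis
    using idx by (auto simp: C(1) ut_one_def fun_eq_iff)
qed

context
  fixes n :: enat and k :: nat and \<phi> :: "('a::field) mat \<Rightarrow> 'a mat"
    and y :: "'a mat" and \<beta> :: 'a and \<alpha> :: "nat \<Rightarrow> 'a"
  assumes PC: "PC_map n \<phi>" and AI: "almost_identity n \<phi>"
    and k_pos: "0 < k" and k_le: "enat k + 3 \<le> n"
    and y_eq: "y = (\<lambda>r s. ut_one n r s + (if s = k \<and> 1 \<le> r \<and> r < k then \<alpha> r else 0)
                          + (if r = k+1 \<and> s = k+2 then \<beta> else 0))"
begin

lemma ut_idx_le_k3: "1 \<le> m \<Longrightarrow> m \<le> k + 3 \<Longrightarrow> ut_idx n m"
  using k_le ut_idx_trans[of n "k+3" m] by (simp add: ut_idx_def numeral_eq_enat)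

lemma y_UT: "y \<in> UT n"
  using ut_idx_le_k3 k_pos by (intro UTI) (auto simp: y_eq ut_one_def)

lemma phi_y_UT: "\<phi> y \<in> UT n"
  using PC y_UT by (auto simp: PC_map_def bij_betw_def)

lemma phi_y_row_ident:
  assumes r: "ut_idx n r" "2 \<le> r" "k \<le> r" "r \<noteq> k+1"
  shows "\<phi> y r s = ut_one n r s"
proof -
  have idx: "ut_idx n 1" "1 < r" using r ut_idx_le_k3[of 1] by auto
  \<comment> \<open>\<open>t_1r(0)\<close> is the identity: y commutes with \<open>t_1r(1)\<close>\<close>
  have "ut_comm n y (ut_t n 1 r 1) = ut_t n 1 r 0"
    using r idx by (subst ut_comm_t_eq_t_iff[OF y_UT]) (auto simp: y_eq ut_one_def)
  then have "ut_comm n (\<phi> y) (ut_t n 1 r 1) = ut_t n 1 r 0"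
    by (rule PC_map_almost_identity_comm_t[OF PC AI y_UT idx(1) r(1) idx(2) idx(1) r(1) idx(2)])
  from ut_comm_t_first_row[OF phi_y_UT r(1) idx(2) r(1) idx(2) this] show ?thesis by simp
qed

lemma phi_y_row:
  assumes r: "2 \<le> r"
  shows "\<phi> y r s = y r s"
proof (cases "ut_idx n r")
  case False
  then show ?thesis using UT_zero_row[OF phi_y_UT] UT_zero_row[OF y_UT] by simp
next
  case True
  have idx: "ut_idx n 1" "1 < r" "ut_idx n k" "ut_idx n (k+2)" "1 < k+2"
    using r k_pos ut_idx_le_k3 by auto
  have row_k2: "\<phi> y (k+2) s' = ut_one n (k+2) s'" for s'
    by (rule phi_y_row_ident) (use idx in auto)
  consider "r < k" | "r = k+1" | "k \<le> r" "r \<noteq> k+1" by linarith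
  then show ?thesis
  proof cases
    case 1
    have "ut_comm n y (ut_t n 1 r 1) = ut_t n 1 k (- \<alpha> r)"
      using True r 1 idx by (subst ut_comm_t_eq_t_iff[OF y_UT]) (auto simp: y_eq ut_one_def)
    then have "ut_comm n (\<phi> y) (ut_t n 1 r 1) = ut_t n 1 k (- \<alpha> r)"
      using 1 idx
      by (intro PC_map_almost_identity_comm_t[OF PC AI y_UT idx(1) True _ idx(1) idx(3)]) auto
    from ut_comm_t_first_row[OF phi_y_UT True idx(2) idx(3) _ this] show ?thesis
      using 1 r idx(3) phi_y_row_ident[OF idx(3), of s] by (simp add: y_eq ut_one_def)
  next
    case 2
    have "ut_comm n y (ut_t n 1 r 1) = ut_t n 1 (k+2) (- \<beta>)"
      using True 2 idx by (subst ut_comm_t_eq_t_iff[OF y_UT]) (auto simp: y_eq ut_one_def)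
    then have "ut_comm n (\<phi> y) (ut_t n 1 r 1) = ut_t n 1 (k+2) (- \<beta>)"
      by (rule PC_map_almost_identity_comm_t[OF PC AI y_UT idx(1) True idx(2) idx(1) idx(4) idx(5)])
    from ut_comm_t_first_row[OF phi_y_UT True idx(2) idx(4) idx(5) this] show ?thesis
      using 2 idx(4) row_k2[of s] by (simp add: y_eq ut_one_def)
  next
    case 3
    then show ?thesis using phi_y_row_ident[OF True r] by (simp add: y_eq)
  qed
qed

lemma phi_y_first_row:
  assumes s: "k < s" "ut_idx n (s+1)"
  shows "\<phi> y 1 s = y 1 s"
proof -
  have idx: "ut_idx n s" using s ut_idx_trans[OF s(2), of s] by simp
  have y1s: "y 1 s = 0" using s k_pos by (simp add: y_eq ut_one_def)
  show ?thesis
  proof (cases "s = k+2")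
    case True
    have idx': "ut_idx n (k+1)" "ut_idx n (k+2)" "ut_idx n (k+3)" using ut_idx_le_k3 by auto
    have "ut_comm n y (ut_t n (k+2) (k+3) 1) = ut_t n (k+1) (k+3) \<beta>"
      using idx' True s by (subst ut_comm_t_eq_t_iff[OF y_UT]) (auto simp: y_eq ut_one_def)
    then have "ut_comm n (\<phi> y) (ut_t n (k+2) (k+3) 1) = ut_t n (k+1) (k+3) \<beta>"
      using idx' True s by (intro PC_map_almost_identity_comm_t[OF PC AI y_UT]) auto
    from ut_comm_t_column[OF phi_y_UT _ _ _ _ _ _ this, of 1] show ?thesis
      using idx' True s k_pos y1s by simp
  next
    case False
    have "ut_comm n y (ut_t n s (s+1) 1) = ut_t n s (s+1) 0"
      using idx s False by (subst ut_comm_t_eq_t_iff[OF y_UT]) (auto simp: y_eq ut_one_def)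
    then have "ut_comm n (\<phi> y) (ut_t n s (s+1) 1) = ut_t n s (s+1) 0"
      using idx s by (intro PC_map_almost_identity_comm_t[OF PC AI y_UT]) auto
    from ut_comm_t_column[OF phi_y_UT _ _ _ _ _ _ this, of 1] show ?thesis
      using idx s k_pos y1s by simp
  qed
qed

lemma phi_y_eq_off_corner:
  assumes X: "cond_X n \<phi> k" and rs: "\<not> (r = 1 \<and> enat s = n)"
  shows "\<phi> y r s = y r s"
proof -
  have zero: "\<phi> y r s = y r s" if "\<not> ut_idx n r \<or> \<not> ut_idx n s"
    using that UT_zero_row[OF phi_y_UT] UT_zero_row[OF y_UT]
      UT_zero_col[OF phi_y_UT] UT_zero_col[OF y_UT] by metis
  consider "r = 0" | "2 \<le> r" | "r = 1" "s \<le> k" | "r = 1" "k < s" by linarith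
  then show ?thesis
  proof cases
    case 1
    then show ?thesis by (intro zero) (simp add: ut_idx_def)
  next
    case 2
    then show ?thesis by (rule phi_y_row)
  next
    case 3
    consider "s = 0" | "s = 1" | "2 \<le> s" by linarith
    then show ?thesis
      using 3 X y_UT zero UT_diag[OF phi_y_UT] UT_diag[OF y_UT] ut_idx_le_k3[of 1]
      by cases (auto simp: cond_X_def ut_idx_def)
  next
    case 4
    have "ut_idx n (s+1) \<or> \<not> ut_idx n s"
      using rs 4 by (auto simp: ut_idx_def Suc_ile_eq)
    then show ?thesis using 4 phi_y_first_row zero by auto
  qed
qed

end

theorem mainTheorem2:
  fixes n :: enat and \<phi> :: "('a::field) mat \<Rightarrow> 'a mat" and k :: nat
  assumes "PC_map n \<phi>" and "almost_identity n \<phi>"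
    and "0 < k" and "enat k + 3 \<le> n"
    and "cond_X n \<phi> k"
  shows "cond_Y n \<phi> k"
  unfolding cond_Y_def Let_def
proof (intro allI)
  fix \<beta> :: 'a and \<alpha> :: "nat \<Rightarrow> 'a"
  define y where "y = ut_mult (ut_t n (k+1) (k+2) \<beta>) (col_prod n k \<alpha> k)"
  have k3: "enat (k + 3) \<le> n" using assms(4) by (simp add: numeral_eq_enat)
  have k2: "enat (k + 2) \<le> n" by (rule order_trans[OF _ k3]) simp
  have n: "1 < n" by (rule order_less_le_trans[OF _ k3]) (simp add: one_enat_def)
  have y_eq: "y = (\<lambda>r s. ut_one n r s + (if s = k \<and> 1 \<le> r \<and> r < k then \<alpha> r else 0)
                          + (if r = k+1 \<and> s = k+2 then \<beta> else 0))"
    unfolding y_def using ut_t_col_prod[OF assms(3) k2] .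
  show "\<exists>c\<in>ut_center n. \<phi> y = ut_mult y c"
    by (rule UT_eq_off_corner[OF y_UT[OF assms(1-4) y_eq] phi_y_UT[OF assms(1-4) y_eq] n
          phi_y_eq_off_corner[OF assms(1-4) y_eq assms(5)]])
qed

end
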